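(* For $j\in\mathbb{Z}_{\ge0}$, \[ B_j(x)=D(x)\Big[\beta_E(j)^2+x\{\beta_E(j+1)^2-q^{-1}(q^{-1}\lambda^2-1)\beta_E(j)^2\}+q^{-1}x^2\{\beta_E(j+1)-q^{-1}\lambda\,\beta_E(j)\}^2\Big], \] where $B_j(x)=\sum_{l\ge0}\beta_E(l+j)^2x^l$ and $D(x)=\{1-(q^{-1}\lambda^2-1)q^{-1}x+(q^{-1}\lambda^2-1)q^{-2}x^2-q^{-3}x^3\}^{-1}$.
   Context: $F$ is a $p$-adic field with odd residue cardinality $q$, uniformizer $\varpi$. $\pi$ is an irreducible unitary unramified representation of $\mathrm{GL}_2(F)$ with trivial central character, a quotient of $\chi\times\chi^{-1}$ with $\chi$ unramified; $\alpha=\chi(\varpi)$, $\lambda=q^{1/2}(\alpha+\alpha^{-1})\in\mathbb{R}$. $\phi$ is the spherical unit vector, $E$ a quadratic étale algebra over $F$, $\alpha_E(\phi_1,\phi_2)=\int_{F^\times\backslash E^\times}\langle\pi(t)\phi_1,\phi_2\rangle d^\times t$ with $\alpha_E(\phi,\phi)\ne0$, and $\beta_E(l)=\alpha_E(\pi(\mathrm{diag}(\varpi^{-l},1))\phi,\phi)/\alpha_E(\phi,\phi)$, satisfying $q\beta_E(l+2)-\lambda\beta_E(l+1)+\beta_E(l)=0$. *)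

theory Defs
  imports "HOL-Computational_Algebra.Formal_Power_Series"
begin

definition B_fps :: "(nat \<Rightarrow> complex) \<Rightarrow> nat \<Rightarrow> complex fps" where
  "B_fps beta j = Abs_fps (\<lambda>l. (beta (l + j))\<^sup>2)"

definition D_fps :: "nat \<Rightarrow> real \<Rightarrow> complex fps" where
  "D_fps q lam = (let Q = complex_of_real (real q); L = complex_of_real lam;
      c = inverse Q * L\<^sup>2 - 1 in
      inverse (1 - fps_const (c * inverse Q) * fps_X
               + fps_const (c * inverse Q ^ 2) * fps_X ^ 2
               - fps_const (inverse Q ^ 3) * fps_X ^ 3))"

end

theory Submission
  imports Defs
begin

text \<open>If \<open>b\<close> satisfies a second-order linear recurrence with characteristic roots
  \<open>a, a'\<close>, then \<open>b\<^sup>2\<close> is a combination of \<open>(a\<^sup>2)\<^sup>n\<close>, \<open>(a a')\<^sup>n\<close> and \<open>(a'\<^sup>2)\<^sup>n\<close>, so it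
  satisfies the third-order recurrence with characteristic roots \<open>a\<^sup>2, a a', a'\<^sup>2\<close>.
  For \<open>\<beta>\<^sub>E\<close> we have \<open>a + a' = \<lambda>/q\<close> and \<open>a a' = 1/q\<close>, and the reversed characteristic
  polynomial of that third-order recurrence is \<open>1/D(x)\<close>. Hence \<open>B\<^sub>j(x)/D(x)\<close> is a polynomial
  of degree at most two, determined by the first three terms \<open>\<beta>\<^sub>E(j)\<^sup>2, \<beta>\<^sub>E(j+1)\<^sup>2, \<beta>\<^sub>E(j+2)\<^sup>2\<close>.\<close>

text \<open>The coefficients are the elementary symmetric functions of \<open>a\<^sup>2, a a', a'\<^sup>2\<close>,
  expressed through \<open>s = a + a'\<close> and \<open>t = a a'\<close>.\<close>
lemma square_of_second_order_recurrence:
  fixes b :: "nat \<Rightarrow> 'a::comm_ring_1"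
  assumes rec: "\<And>n. b (n + 2) = s * b (n + 1) - t * b n"
  shows "(b (n + 3))\<^sup>2 = (s\<^sup>2 - t) * (b (n + 2))\<^sup>2 - t * (s\<^sup>2 - t) * (b (n + 1))\<^sup>2 + t ^ 3 * (b n)\<^sup>2"
proof -
  have b2: "b (n + 2) = s * b (n + 1) - t * b n"
    by (rule rec)
  have b3: "b (n + 3) = s * (s * b (n + 1) - t * b n) - t * b (n + 1)"
    using rec[of "n + 1"] b2 by (simp add: numeral_3_eq_3 numeral_2_eq_2)
  show ?thesis
    unfolding b2 b3 by (simp add: algebra_simps power2_eq_square power3_eq_cube)
qed

lemma fps_third_order_recurrence:
  fixes u :: "nat \<Rightarrow> 'a::comm_ring_1"
  assumes rec: "\<And>n. u (n + 3) = e1 * u (n + 2) - e2 * u (n + 1) + e3 * u n"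
  shows "(1 - fps_const e1 * fps_X + fps_const e2 * fps_X ^ 2 - fps_const e3 * fps_X ^ 3)
           * Abs_fps u
         = fps_const (u 0) + fps_const (u 1 - e1 * u 0) * fps_X
           + fps_const (u 2 - e1 * u 1 + e2 * u 0) * fps_X ^ 2"
    (is "?P * ?U = ?N")
proof (rule fps_ext)
  fix n :: nat
  have expand: "?P * ?U = ?U - fps_const e1 * (fps_X * ?U) + fps_const e2 * (fps_X ^ 2 * ?U)
                            - fps_const e3 * (fps_X ^ 3 * ?U)"
    by (simp add: algebra_simps)
  have "n = 0 \<or> n = 1 \<or> n = 2 \<or> (\<exists>m. n = m + 3)"
    by presburger
  then consider "n = 0" | "n = 1" | "n = 2" | m where "n = m + 3"
    by blast
  then show "fps_nth (?P * ?U) n = fps_nth ?N n"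
  proof cases
    case (4 m)
    then have "fps_nth (?P * ?U) n = u (m + 3) - e1 * u (m + 2) + e2 * u (m + 1) - e3 * u m"
      unfolding expand 4 by (simp add: fps_X_power_mult_nth)
    also have "\<dots> = 0"
      by (simp add: rec)
    finally show ?thesis
      using 4 by (simp add: fps_X_power_mult_nth)
  qed (simp_all add: expand fps_X_power_mult_nth)
qed

lemma fps_squares_of_second_order_recurrence:
  fixes b :: "nat \<Rightarrow> 'a::comm_ring_1"
  assumes rec: "\<And>n. b (n + 2) = s * b (n + 1) - t * b n"
  shows "(1 - fps_const (s\<^sup>2 - t) * fps_X + fps_const (t * (s\<^sup>2 - t)) * fps_X ^ 2
            - fps_const (t ^ 3) * fps_X ^ 3) * Abs_fps (\<lambda>n. (b n)\<^sup>2)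
         = fps_const ((b 0)\<^sup>2) + fps_const ((b 1)\<^sup>2 - (s\<^sup>2 - t) * (b 0)\<^sup>2) * fps_X
           + fps_const (t * (b 1 - s * b 0)\<^sup>2) * fps_X ^ 2"
proof -
  have b2: "b 2 = s * b 1 - t * b 0"
    using rec[of 0] by (simp add: numeral_2_eq_2)
  have "(b 2)\<^sup>2 - (s\<^sup>2 - t) * (b 1)\<^sup>2 + t * (s\<^sup>2 - t) * (b 0)\<^sup>2 = t * (b 1 - s * b 0)\<^sup>2"
    unfolding b2 by (simp add: power2_eq_square algebra_simps)
  with fps_third_order_recurrence[OF square_of_second_order_recurrence[OF rec]]
  show ?thesis
    by simp
qed

lemma fps_eq_inverse_mult:
  fixes P A N :: "'a::field fps"
  assumes "fps_nth P 0 \<noteq> 0" and "P * A = N"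
  shows "A = inverse P * N"
proof -
  have "inverse P * P = 1"
    using assms(1) by (rule inverse_mult_eq_1)
  then show ?thesis
    using assms(2) by (metis mult.assoc mult_1)
qed

theorem proposition4p3:
  fixes p k q :: nat and lam :: real and beta :: "nat \<Rightarrow> complex" and j :: nat
  assumes "prime p" and "odd p" and "k \<ge> 1" and "q = p ^ k"
    and rec: "\<And>l. of_nat q * beta (l + 2) - of_real lam * beta (l + 1) + beta l = 0"
  shows "B_fps beta j =
    D_fps q lam *
      (let Q = complex_of_real (real q); L = complex_of_real lam in
        fps_const ((beta j)\<^sup>2)
      + fps_X * fps_const ((beta (j + 1))\<^sup>2 - inverse Q * (inverse Q * L\<^sup>2 - 1) * (beta j)\<^sup>2)
      + fps_const (inverse Q) * fps_X ^ 2 * fps_const ((beta (j + 1) - inverse Q * L * beta j)\<^sup>2))"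
proof -
  define Q where "Q = complex_of_real (real q)"
  define L where "L = complex_of_real lam"
  have "Q \<noteq> 0"
    using \<open>prime p\<close> \<open>q = p ^ k\<close> by (simp add: Q_def prime_gt_0_nat)
  have rec_shifted:
    "beta (n + 2 + j) = (inverse Q * L) * beta (n + 1 + j) - inverse Q * beta (n + j)" for n
    using rec[of "n + j"] \<open>Q \<noteq> 0\<close> by (simp add: Q_def L_def field_simps add_ac)
  let ?P = "1 - fps_const ((inverse Q * L)\<^sup>2 - inverse Q) * fps_X
              + fps_const (inverse Q * ((inverse Q * L)\<^sup>2 - inverse Q)) * fps_X ^ 2
              - fps_const (inverse Q ^ 3) * fps_X ^ 3"
  have PB: "?P * B_fps beta j =
      fps_const ((beta j)\<^sup>2)
      + fps_X * fps_const ((beta (j + 1))\<^sup>2 - inverse Q * (inverse Q * L\<^sup>2 - 1) * (beta j)\<^sup>2)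
      + fps_const (inverse Q) * fps_X ^ 2 * fps_const ((beta (j + 1) - inverse Q * L * beta j)\<^sup>2)"
    using fps_squares_of_second_order_recurrence[where b = "\<lambda>n. beta (n + j)", OF rec_shifted]
    by (simp add: B_fps_def power2_eq_square algebra_simps)
  have D: "D_fps q lam = inverse ?P"
  proof -
    have "(inverse Q * L)\<^sup>2 - inverse Q = (inverse Q * L\<^sup>2 - 1) * inverse Q"
      by (simp add: power2_eq_square algebra_simps)
    moreover have "inverse Q * ((inverse Q * L)\<^sup>2 - inverse Q)
                   = (inverse Q * L\<^sup>2 - 1) * inverse Q ^ 2"
      by (simp add: power2_eq_square algebra_simps)
    ultimately show ?thesis
      by (simp only: D_fps_def Q_def[symmetric] L_def[symmetric] Let_def)
  qed
  show ?thesis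
    unfolding Let_def Q_def[symmetric] L_def[symmetric] D
    by (rule fps_eq_inverse_mult[OF _ PB]) simp
qed

end
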